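(* Let $G$ be a non-complete double-critical $k$-chromatic graph and $x\in V(G)$. Then $\alpha_x\ge 2$, and $$\deg_G(x)-\alpha_x\ \ge\ |B(xy)|+1\ \ge\ k-1,$$ where $y\in N(x)$ is any vertex contained in an independent set of $G_x$ of size $\alpha_x$.
   Context: All graphs are finite and simple. A graph $G$ is (vertex-)critical if $\chi(G-v)<\chi(G)$ for every vertex $v\in V(G)$. A critical graph $G$ is double-critical if $\chi(G-x-y)\le\chi(G)-2$ for every edge $xy\in E(G)$. For a vertex $x$, $G_x:=G[N(x)]$ is the subgraph induced by the neighbourhood of $x$ and $\alpha_x:=\alpha(G_x)$ its independence number. For an edge $xy$, $B(xy):=N(x)\cap N(y)$ is the common neighbourhood of $x$ and $y$. *)

theory Defs
  imports Main
begin

definition sgraph :: "'a set \<Rightarrow> 'a set set \<Rightarrow> bool" where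
  "sgraph V E \<longleftrightarrow> finite V \<and> (\<forall>e\<in>E. \<exists>u v. e = {u, v} \<and> u \<noteq> v \<and> u \<in> V \<and> v \<in> V)"

definition adj :: "'a set set \<Rightarrow> 'a \<Rightarrow> 'a \<Rightarrow> bool" where
  "adj E u v \<longleftrightarrow> {u, v} \<in> E"

definition colouring :: "'a set \<Rightarrow> 'a set set \<Rightarrow> nat \<Rightarrow> ('a \<Rightarrow> nat) \<Rightarrow> bool" where
  "colouring V E k f \<longleftrightarrow> (\<forall>v\<in>V. f v < k) \<and> (\<forall>u\<in>V. \<forall>v\<in>V. adj E u v \<longrightarrow> f u \<noteq> f v)"

definition chromatic_number :: "'a set \<Rightarrow> 'a set set \<Rightarrow> nat" where
  "chromatic_number V E = (LEAST k. \<exists>f. colouring V E k f)"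

definition del_verts_E :: "'a set set \<Rightarrow> 'a set \<Rightarrow> 'a set set" where
  "del_verts_E E S = {e \<in> E. e \<inter> S = {}}"

definition vertex_critical :: "'a set \<Rightarrow> 'a set set \<Rightarrow> bool" where
  "vertex_critical V E \<longleftrightarrow>
     (\<forall>v\<in>V. chromatic_number (V - {v}) (del_verts_E E {v}) < chromatic_number V E)"

definition double_critical :: "'a set \<Rightarrow> 'a set set \<Rightarrow> bool" where
  "double_critical V E \<longleftrightarrow> vertex_critical V E \<and>
     (\<forall>x\<in>V. \<forall>y\<in>V. adj E x y \<longrightarrow>
        chromatic_number (V - {x, y}) (del_verts_E E {x, y}) \<le> chromatic_number V E - 2)"

definition complete_graph :: "'a set \<Rightarrow> 'a set set \<Rightarrow> bool" where
  "complete_graph V E \<longleftrightarrow> (\<forall>u\<in>V. \<forall>v\<in>V. u \<noteq> v \<longrightarrow> adj E u v)"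

definition nbhd :: "'a set \<Rightarrow> 'a set set \<Rightarrow> 'a \<Rightarrow> 'a set" where
  "nbhd V E x = {v \<in> V. adj E x v}"

definition degree :: "'a set \<Rightarrow> 'a set set \<Rightarrow> 'a \<Rightarrow> nat" where
  "degree V E x = card (nbhd V E x)"

definition independent :: "'a set set \<Rightarrow> 'a set \<Rightarrow> bool" where
  "independent E S \<longleftrightarrow> (\<forall>u\<in>S. \<forall>v\<in>S. \<not> adj E u v)"

text \<open>Independence number of G_x = G[N(x)] (independent sets of G_x are exactly
  the independent sets of G contained in N(x)).\<close>
definition alpha_nbhd :: "'a set \<Rightarrow> 'a set set \<Rightarrow> 'a \<Rightarrow> nat" where
  "alpha_nbhd V E x = Max {card S | S. S \<subseteq> nbhd V E x \<and> independent E S}"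

definition common_nbhd :: "'a set \<Rightarrow> 'a set set \<Rightarrow> 'a \<Rightarrow> 'a \<Rightarrow> 'a set" where
  "common_nbhd V E x y = nbhd V E x \<inter> nbhd V E y"

end

theory Submission
  imports Defs
begin

text \<open>If \<open>xy\<close> is an edge and \<open>\<phi>\<close> a \<open>(k-2)\<close>-colouring of \<open>G - x - y\<close>, every colour
  \<open>c < k - 2\<close> occurs on \<open>B(xy)\<close>: otherwise colour \<open>y\<close> with \<open>c\<close>, and \<open>x\<close> together with the
  \<open>c\<close>-coloured neighbours of \<open>y\<close> (none of which is adjacent to \<open>x\<close>) with a new colour, a
  \<open>(k-1)\<close>-colouring of \<open>G\<close>. Hence \<open>|B(xy)| \<ge> k - 2\<close>.
  A maximum independent set \<open>S\<close> of \<open>G\<^sub>x\<close> containing \<open>y\<close> has a second vertex \<open>z\<close>, since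
  otherwise \<open>N[x]\<close> would be a clique of size \<open>\<ge> k\<close> avoiding some vertex of the critical graph
  \<open>G\<close>. The disjoint sets \<open>S\<close> and \<open>B(xy)\<close> do not cover \<open>N(x)\<close>: the first observation for the
  edge \<open>xz\<close> and the colour of \<open>y\<close> gives a vertex of \<open>B(xz)\<close> coloured like \<open>y\<close>, which is
  adjacent to \<open>z\<close> and not to \<open>y\<close>. So \<open>deg(x) \<ge> \<alpha>\<^sub>x + |B(xy)| + 1\<close>.\<close>

definition clique :: "'a set set \<Rightarrow> 'a set \<Rightarrow> bool" where
  "clique E K \<longleftrightarrow> (\<forall>u\<in>K. \<forall>v\<in>K. u \<noteq> v \<longrightarrow> adj E u v)"

lemma adj_commute: "adj E u v \<longleftrightarrow> adj E v u"
  by (simp add: adj_def insert_commute)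

lemma sgraph_adjD:
  assumes "sgraph V E" "adj E u v"
  shows "u \<noteq> v" "u \<in> V" "v \<in> V"
  using assms unfolding sgraph_def adj_def
  by (metis doubleton_eq_iff)+

lemma adj_del_verts_E_iff: "adj (del_verts_E E S) u v \<longleftrightarrow> adj E u v \<and> u \<notin> S \<and> v \<notin> S"
  by (auto simp: adj_def del_verts_E_def)

lemma sgraph_del_verts:
  assumes "sgraph V E"
  shows "sgraph (V - S) (del_verts_E E S)"
  unfolding sgraph_def
proof (intro conjI ballI)
  show "finite (V - S)" using assms by (simp add: sgraph_def)
next
  fix e assume "e \<in> del_verts_E E S"
  then have "e \<in> E" and disj: "e \<inter> S = {}" by (auto simp: del_verts_E_def)
  then obtain u v where "e = {u, v}" "u \<noteq> v" "u \<in> V" "v \<in> V"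
    using assms by (meson sgraph_def)
  then show "\<exists>u v. e = {u, v} \<and> u \<noteq> v \<and> u \<in> V - S \<and> v \<in> V - S"
    using disj by auto
qed

lemma finite_nbhd: "finite V \<Longrightarrow> finite (nbhd V E x)"
  by (simp add: nbhd_def)

lemma colouring_mono: "colouring V E m f \<Longrightarrow> m \<le> n \<Longrightarrow> colouring V E n f"
  by (auto simp: colouring_def)

lemma chromatic_number_le: "colouring V E m f \<Longrightarrow> chromatic_number V E \<le> m"
  unfolding chromatic_number_def by (rule Least_le) blast

lemma colouring_chromatic_number:
  assumes "sgraph V E"
  shows "\<exists>f. colouring V E (chromatic_number V E) f"
proof -
  obtain h where h: "bij_betw h V {0..<card V}"
    using ex_bij_betw_finite_nat assms by (auto simp: sgraph_def)
  then have "colouring V E (card V) h"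
    using sgraph_adjD[OF assms] unfolding colouring_def bij_betw_def inj_on_def
    by (metis atLeastLessThan_iff imageI)
  then have "\<exists>k f. colouring V E k f" by blast
  then show ?thesis unfolding chromatic_number_def by (rule LeastI_ex)
qed

lemma colouring_if_chromatic_number_le:
  "sgraph V E \<Longrightarrow> chromatic_number V E \<le> m \<Longrightarrow> \<exists>f. colouring V E m f"
  using colouring_chromatic_number colouring_mono by blast

lemma card_clique_le:
  assumes "colouring V E m f" "clique E K" "K \<subseteq> V" "finite K"
  shows "card K \<le> m"
proof -
  have "inj_on f K" using assms unfolding inj_on_def colouring_def clique_def by blast
  moreover have "f ` K \<subseteq> {..<m}" using assms unfolding colouring_def by auto
  ultimately show ?thesis by (metis card_image card_lessThan card_mono finite_lessThan)
qed

lemma card_le_alpha_nbhd: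
  assumes "finite V" "S \<subseteq> nbhd V E x" "independent E S"
  shows "card S \<le> alpha_nbhd V E x"
proof -
  have "{card S | S. S \<subseteq> nbhd V E x \<and> independent E S} \<subseteq> card ` Pow (nbhd V E x)"
    by auto
  moreover have "finite (card ` Pow (nbhd V E x))"
    using finite_nbhd[OF assms(1)] by simp
  ultimately have "finite {card S | S. S \<subseteq> nbhd V E x \<and> independent E S}"
    by (rule finite_subset)
  then show ?thesis
    unfolding alpha_nbhd_def by (rule Max_ge) (use assms(2,3) in blast)
qed

lemma vertex_critical_colouring_del:
  assumes "sgraph V E" "vertex_critical V E" "v \<in> V"
  shows "\<exists>f. colouring (V - {v}) (del_verts_E E {v}) (chromatic_number V E - 1) f"
proof -
  have "chromatic_number (V - {v}) (del_verts_E E {v}) \<le> chromatic_number V E - 1"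
    using assms(2,3) by (auto simp: vertex_critical_def)
  then show ?thesis by (rule colouring_if_chromatic_number_le[OF sgraph_del_verts[OF assms(1)]])
qed

lemma double_critical_colouring_del:
  assumes "sgraph V E" "double_critical V E" "adj E x y"
  shows "\<exists>\<phi>. colouring (V - {x, y}) (del_verts_E E {x, y}) (chromatic_number V E - 2) \<phi>"
proof -
  have "chromatic_number (V - {x, y}) (del_verts_E E {x, y}) \<le> chromatic_number V E - 2"
    using assms(2,3) sgraph_adjD[OF assms(1,3)] by (simp add: double_critical_def)
  then show ?thesis by (rule colouring_if_chromatic_number_le[OF sgraph_del_verts[OF assms(1)]])
qed

lemma colour_in_common_nbhd:
  assumes sg: "sgraph V E" and xy: "adj E x y"
    and col: "colouring (V - {x, y}) (del_verts_E E {x, y}) (chromatic_number V E - 2) \<phi>"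
    and c: "c < chromatic_number V E - 2"
  shows "\<exists>b\<in>common_nbhd V E x y. \<phi> b = c"
proof (rule ccontr)
  define k where "k = chromatic_number V E"
  assume "\<not> ?thesis"
  then have no_c: "\<And>b. adj E x b \<Longrightarrow> adj E y b \<Longrightarrow> \<phi> b \<noteq> c"
    using sgraph_adjD[OF sg] by (auto simp: common_nbhd_def nbhd_def)
  have "x \<noteq> y" using sgraph_adjD[OF sg xy] by simp
  have \<phi>_range: "\<And>w. w \<in> V \<Longrightarrow> w \<noteq> x \<Longrightarrow> w \<noteq> y \<Longrightarrow> \<phi> w < k - 2"
    using col by (auto simp: colouring_def k_def)
  have \<phi>_proper: "\<And>u v. \<lbrakk>u \<in> V; v \<in> V; u \<notin> {x, y}; v \<notin> {x, y}; adj E u v\<rbrakk> \<Longrightarrow> \<phi> u \<noteq> \<phi> v"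
    using col by (auto simp: colouring_def adj_del_verts_E_iff)
  define \<psi> where "\<psi> v = (if v = x then k - 2 else if v = y then c
    else if \<phi> v = c \<and> adj E y v then k - 2 else \<phi> v)" for v
  have "colouring V E (k - 1) \<psi>"
    unfolding colouring_def
  proof safe
    fix v assume "v \<in> V"
    then show "\<psi> v < k - 1" using \<phi>_range[of v] c by (auto simp: \<psi>_def k_def)
  next
    fix u v assume "u \<in> V" "v \<in> V" "adj E u v" "\<psi> u = \<psi> v"
    moreover have "adj E v u" "u \<noteq> v"
      using \<open>adj E u v\<close> sgraph_adjD(1)[OF sg] by (auto simp: adj_commute)
    ultimately show False
      using \<phi>_range[THEN less_imp_neq] \<phi>_proper no_c \<open>x \<noteq> y\<close> c adj_commute[of E y]
      by (auto simp: \<psi>_def k_def split: if_splits)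
  qed
  then have "k \<le> k - 1" unfolding k_def by (rule chromatic_number_le)
  then show False using c k_def by linarith
qed

lemma chromatic_number_le_card_common_nbhd:
  assumes sg: "sgraph V E" and "double_critical V E" "adj E x y"
  shows "chromatic_number V E \<le> card (common_nbhd V E x y) + 2"
proof -
  let ?B = "common_nbhd V E x y"
  obtain \<phi> where \<phi>: "colouring (V - {x, y}) (del_verts_E E {x, y}) (chromatic_number V E - 2) \<phi>"
    using double_critical_colouring_del[OF assms] by blast
  have fin: "finite ?B"
    using sg by (simp add: sgraph_def common_nbhd_def finite_nbhd)
  have "{..<chromatic_number V E - 2} \<subseteq> \<phi> ` ?B"
    using colour_in_common_nbhd[OF sg \<open>adj E x y\<close> \<phi>] by blast
  then have "card {..<chromatic_number V E - 2} \<le> card (\<phi> ` ?B)"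
    using fin by (intro card_mono) auto
  then have "chromatic_number V E - 2 \<le> card (\<phi> ` ?B)" by simp
  also have "\<dots> \<le> card ?B"
    using fin by (rule card_image_le)
  finally show ?thesis by linarith
qed

lemma vertex_critical_chromatic_number_le_Suc_degree:
  assumes sg: "sgraph V E" and vc: "vertex_critical V E" and "x \<in> V"
  shows "chromatic_number V E \<le> Suc (degree V E x)"
proof (rule ccontr)
  let ?k = "chromatic_number V E" and ?N = "nbhd V E x"
  assume "\<not> ?thesis"
  then have small: "card ?N < ?k - 1" by (simp add: degree_def)
  obtain \<psi> where \<psi>: "colouring (V - {x}) (del_verts_E E {x}) (?k - 1) \<psi>"
    using vertex_critical_colouring_del[OF sg vc \<open>x \<in> V\<close>] by blast
  have "finite ?N" using sg by (simp add: sgraph_def finite_nbhd)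
  then have "card (\<psi> ` ?N) < ?k - 1"
    using small card_image_le by (metis le_less_trans)
  then have "\<not> {..<?k - 1} \<subseteq> \<psi> ` ?N"
    using \<open>finite ?N\<close> by (metis card_lessThan card_mono finite_imageI not_le)
  then obtain c where c: "c < ?k - 1" "c \<notin> \<psi> ` ?N" by blast
  have "colouring V E (?k - 1) (\<psi>(x := c))"
    unfolding colouring_def
  proof safe
    fix v assume "v \<in> V"
    then show "(\<psi>(x := c)) v < ?k - 1" using \<psi> c by (auto simp: colouring_def)
  next
    fix u v assume "u \<in> V" "v \<in> V" "adj E u v" "(\<psi>(x := c)) u = (\<psi>(x := c)) v"
    moreover have "u \<noteq> v" using \<open>adj E u v\<close> by (rule sgraph_adjD[OF sg])
    ultimately show False
      using \<psi> c adj_commute[of E _ x]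
      by (auto simp: colouring_def adj_del_verts_E_iff nbhd_def split: if_splits)
  qed
  then have "?k \<le> ?k - 1" by (rule chromatic_number_le)
  then show False using small by linarith
qed

lemma vertex_critical_card_clique_less:
  assumes sg: "sgraph V E" and vc: "vertex_critical V E"
    and K: "clique E K" "K \<subseteq> V" and v: "v \<in> V" "v \<notin> K"
  shows "card K < chromatic_number V E"
proof -
  obtain \<psi> where \<psi>: "colouring (V - {v}) (del_verts_E E {v}) (chromatic_number V E - 1) \<psi>"
    using vertex_critical_colouring_del[OF sg vc v(1)] by blast
  have "clique (del_verts_E E {v}) K"
    using K v by (auto simp: clique_def adj_del_verts_E_iff)
  moreover have "finite K" using K sg by (auto simp: sgraph_def intro: finite_subset)
  ultimately have "card K \<le> chromatic_number V E - 1"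
    using card_clique_le[OF \<psi>] K v by blast
  moreover have "0 < chromatic_number V E"
    using vc v by (auto simp: vertex_critical_def)
  ultimately show ?thesis by linarith
qed

lemma two_le_alpha_nbhd:
  assumes sg: "sgraph V E" and vc: "vertex_critical V E"
    and "\<not> complete_graph V E" and "x \<in> V"
  shows "2 \<le> alpha_nbhd V E x"
proof (cases "clique E (nbhd V E x)")
  case False
  then obtain u w where uw: "u \<in> nbhd V E x" "w \<in> nbhd V E x" "u \<noteq> w" "\<not> adj E u w"
    by (auto simp: clique_def)
  then have "independent E {u, w}"
    using sgraph_adjD(1)[OF sg] by (auto simp: independent_def adj_commute)
  then have "card {u, w} \<le> alpha_nbhd V E x"
    using uw sg by (intro card_le_alpha_nbhd) (auto simp: sgraph_def)
  then show ?thesis using uw by simp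
next
  case True
  let ?K = "insert x (nbhd V E x)"
  have "clique E ?K"
    using True by (auto simp: clique_def nbhd_def adj_commute)
  moreover have "?K \<subseteq> V" using \<open>x \<in> V\<close> by (auto simp: nbhd_def)
  moreover obtain v where "v \<in> V" "v \<notin> ?K"
    using \<open>\<not> complete_graph V E\<close> \<open>clique E ?K\<close>
    by (auto simp: complete_graph_def clique_def)
  ultimately have "card ?K < chromatic_number V E"
    using vertex_critical_card_clique_less[OF sg vc] by blast
  moreover have "x \<notin> nbhd V E x" "finite (nbhd V E x)"
    using sgraph_adjD(1)[OF sg] sg by (auto simp: nbhd_def sgraph_def)
  ultimately show ?thesis
    using vertex_critical_chromatic_number_le_Suc_degree[OF sg vc \<open>x \<in> V\<close>]
    by (simp add: degree_def)
qed

lemma nbhd_not_subset_Un_common_nbhd: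
  assumes sg: "sgraph V E" and dc: "double_critical V E"
    and S: "S \<subseteq> nbhd V E x" "independent E S" and yz: "y \<in> S" "z \<in> S" "y \<noteq> z"
  shows "\<not> nbhd V E x \<subseteq> S \<union> common_nbhd V E x y"
proof
  assume cover: "nbhd V E x \<subseteq> S \<union> common_nbhd V E x y"
  have "adj E x z" "adj E x y" using S yz by (auto simp: nbhd_def)
  obtain \<phi> where \<phi>: "colouring (V - {x, z}) (del_verts_E E {x, z}) (chromatic_number V E - 2) \<phi>"
    using double_critical_colouring_del[OF sg dc \<open>adj E x z\<close>] by blast
  have y: "y \<in> V - {x, z}"
    using yz sgraph_adjD[OF sg \<open>adj E x y\<close>] by auto
  then have "\<phi> y < chromatic_number V E - 2"
    using \<phi> by (simp add: colouring_def)
  then obtain b where b: "b \<in> common_nbhd V E x z" "\<phi> b = \<phi> y"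
    using colour_in_common_nbhd[OF sg \<open>adj E x z\<close> \<phi>] by blast
  then have "b \<notin> S"
    using S(2) yz(2) by (auto simp: common_nbhd_def nbhd_def independent_def)
  then have "adj E y b"
    using b cover by (auto simp: common_nbhd_def nbhd_def)
  moreover have "b \<in> V - {x, z}"
    using b sgraph_adjD(1)[OF sg] by (auto simp: common_nbhd_def nbhd_def)
  ultimately have "\<phi> y \<noteq> \<phi> b"
    using \<phi> y sgraph_adjD(1)[OF sg] unfolding colouring_def by (auto simp: adj_del_verts_E_iff)
  then show False using b by simp
qed

lemma card_Un_common_nbhd_less_degree:
  assumes sg: "sgraph V E" and dc: "double_critical V E"
    and S: "S \<subseteq> nbhd V E x" "independent E S" "y \<in> S" "2 \<le> card S"
  shows "card S + card (common_nbhd V E x y) < degree V E x"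
proof -
  let ?N = "nbhd V E x" and ?B = "common_nbhd V E x y"
  have fin: "finite ?N" using sg by (simp add: sgraph_def finite_nbhd)
  then have "finite S" "finite ?B" using S by (auto simp: common_nbhd_def intro: finite_subset)
  obtain z where "z \<in> S" "z \<noteq> y"
    using S(3,4) \<open>finite S\<close> by (metis card_le_Suc0_iff_eq not_less_eq_eq numeral_2_eq_2)
  then obtain w where w: "w \<in> ?N" "w \<notin> S \<union> ?B"
    using nbhd_not_subset_Un_common_nbhd[OF sg dc S(1,2,3)] by blast
  have "S \<inter> ?B = {}"
    using S(2,3) by (auto simp: common_nbhd_def nbhd_def independent_def)
  then have "card (insert w (S \<union> ?B)) = card S + card ?B + 1"
    using w \<open>finite S\<close> \<open>finite ?B\<close> by (simp add: card_Un_disjoint)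
  moreover have "card (insert w (S \<union> ?B)) \<le> card ?N"
    using w S(1) fin by (intro card_mono) (auto simp: common_nbhd_def)
  ultimately show ?thesis by (simp add: degree_def)
qed

theorem proposition12:
  fixes V :: "'a set" and E :: "'a set set" and k :: nat and x :: 'a
  assumes "sgraph V E"
    and "double_critical V E"
    and "\<not> complete_graph V E"
    and "chromatic_number V E = k"
    and "x \<in> V"
  shows "alpha_nbhd V E x \<ge> 2 \<and>
    (\<forall>y \<in> nbhd V E x.
       (\<exists>S. S \<subseteq> nbhd V E x \<and> independent E S \<and> card S = alpha_nbhd V E x \<and> y \<in> S) \<longrightarrow>
       int (degree V E x) - int (alpha_nbhd V E x) \<ge> int (card (common_nbhd V E x y)) + 1 \<and>
       int (card (common_nbhd V E x y)) + 1 \<ge> int k - 1)"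
proof -
  have "vertex_critical V E" using assms(2) by (simp add: double_critical_def)
  then have \<alpha>: "2 \<le> alpha_nbhd V E x"
    using assms(3,5) by (rule two_le_alpha_nbhd[OF assms(1)])
  show ?thesis
  proof (intro conjI ballI impI)
    fix y assume y: "y \<in> nbhd V E x"
      and "\<exists>S. S \<subseteq> nbhd V E x \<and> independent E S \<and> card S = alpha_nbhd V E x \<and> y \<in> S"
    then obtain S where S: "S \<subseteq> nbhd V E x" "independent E S" "card S = alpha_nbhd V E x" "y \<in> S"
      by blast
    have "card S + card (common_nbhd V E x y) < degree V E x"
      using card_Un_common_nbhd_less_degree[OF assms(1,2) S(1,2,4)] S(3) \<alpha> by simp
    then show "int (card (common_nbhd V E x y)) + 1 \<le> int (degree V E x) - int (alpha_nbhd V E x)"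
      using S(3) by linarith
    have "k \<le> card (common_nbhd V E x y) + 2"
      using chromatic_number_le_card_common_nbhd[OF assms(1,2)] y assms(4) by (simp add: nbhd_def)
    then show "int k - 1 \<le> int (card (common_nbhd V E x y)) + 1" by linarith
  qed (rule \<alpha>)
qed

end
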